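(* Let $G$ be a vigorous subgroup of $\operatorname{Homeo}(\mathfrak{C})$ and let $U\in K_{\mathfrak{C}}$. Then the set $$X_{G,U}:=\{\gamma\in G: \text{there is a proper clopen subset } V \text{ of } U \text{ with } \operatorname{supp}(\gamma)\subseteq V\}$$ generates $\operatorname{pstab}_G(\mathfrak{C}\setminus U)$.
   Context: $\mathfrak{C}$ denotes a Cantor space (a space homeomorphic to $\{0,1\}^\omega$). Groups of homeomorphisms act on the right, and products are composed left to right. $K_{\mathfrak{C}}$ denotes the set of non-empty proper clopen subsets of $\mathfrak{C}$. For $\gamma\in\operatorname{Homeo}(\mathfrak{C})$, $\operatorname{supp}(\gamma)=\{p\in\mathfrak{C}: p\gamma\neq p\}$. For $G\le\operatorname{Homeo}(\mathfrak{C})$ and $A\subseteq\mathfrak{C}$, $\operatorname{pstab}_G(A)=\{g\in G: pg=p \text{ for all } p\in A\}$. A subset $S\subseteq \operatorname{Homeo}(\mathfrak{C})$ is vigorous if for all clopen $A,B,C\subseteq\mathfrak{C}$ with $B,C$ non-empty proper subsets of $A$ there is $\gamma\in S$ with $\operatorname{supp}(\gamma)\subseteq A$ and $B\gamma\subseteq C$. *)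

theory Defs
  imports "HOL-Analysis.Analysis" "HOL-Algebra.Generated_Groups"
begin

definition cantor_space :: "'a topology \<Rightarrow> bool" where
  "cantor_space X \<longleftrightarrow>
     X homeomorphic_space (product_topology (\<lambda>_::nat. discrete_topology (UNIV::bool set)) UNIV)"

definition clopenin :: "'a topology \<Rightarrow> 'a set \<Rightarrow> bool" where
  "clopenin X A \<longleftrightarrow> openin X A \<and> closedin X A"

definition K_sets :: "'a topology \<Rightarrow> 'a set set" where
  "K_sets X = {A. clopenin X A \<and> A \<noteq> {} \<and> A \<subset> topspace X}"

definition Homeo :: "'a topology \<Rightarrow> ('a \<Rightarrow> 'a) set" where
  "Homeo X = {g. homeomorphic_map X X g \<and> (\<forall>x. x \<notin> topspace X \<longrightarrow> g x = x)}"

text \<open>The group Homeo(X); right action, products composed left to right: g*h = h o g.\<close>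
definition homeo_group :: "'a topology \<Rightarrow> ('a \<Rightarrow> 'a) monoid" where
  "homeo_group X = \<lparr>carrier = Homeo X, mult = (\<lambda>g h. h \<circ> g), one = id\<rparr>"

definition supp :: "'a topology \<Rightarrow> ('a \<Rightarrow> 'a) \<Rightarrow> 'a set" where
  "supp X g = {p \<in> topspace X. g p \<noteq> p}"

definition pstab :: "'a topology \<Rightarrow> ('a \<Rightarrow> 'a) set \<Rightarrow> 'a set \<Rightarrow> ('a \<Rightarrow> 'a) set" where
  "pstab X G A = {g \<in> G. \<forall>p \<in> A. g p = p}"

definition vigorous :: "'a topology \<Rightarrow> ('a \<Rightarrow> 'a) set \<Rightarrow> bool" where
  "vigorous X S \<longleftrightarrow>
     (\<forall>A B C. clopenin X A \<and> clopenin X B \<and> clopenin X C \<and>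
        B \<noteq> {} \<and> C \<noteq> {} \<and> B \<subset> A \<and> C \<subset> A \<longrightarrow>
        (\<exists>\<gamma>\<in>S. supp X \<gamma> \<subseteq> A \<and> \<gamma> ` B \<subseteq> C))"

definition X_GU :: "'a topology \<Rightarrow> ('a \<Rightarrow> 'a) set \<Rightarrow> 'a set \<Rightarrow> ('a \<Rightarrow> 'a) set" where
  "X_GU X G U = {\<gamma> \<in> G. \<exists>V. clopenin X V \<and> V \<subset> U \<and> supp X \<gamma> \<subseteq> V}"

end

theory Submission
  imports Defs
begin

text \<open>
  Let g fix the complement of U pointwise. Pick clopen sets Q' \<subset> Q with Q \<union> gQ a proper
  subset of U; this is possible because open subsets of a Cantor space are infinite and have
  clopen neighbourhood bases. Vigorousness provides x \<in> G supported in Q \<union> (\<complement>U) with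
  xQ \<subseteq> Q'. The conjugate a of g by x is supported in x(U) \<subseteq> (U - Q) \<union> Q', a proper clopen
  subset of U, and a agrees with g at every point y with y, gy \<notin> Q; hence a\<inverse>g is
  supported in Q \<union> gQ. So g = a \<cdot> a\<inverse>g is a product of two elements of X_GU.
\<close>

lemma discrete_product_clopen_nhood:
  assumes "openin (product_topology (\<lambda>i. discrete_topology (D i)) I) W" "p \<in> W"
  obtains Q where "clopenin (product_topology (\<lambda>i. discrete_topology (D i)) I) Q" "p \<in> Q" "Q \<subseteq> W"
proof -
  obtain Xs where Xs: "p \<in> (\<Pi>\<^sub>E i\<in>I. Xs i)" "\<forall>i. openin (discrete_topology (D i)) (Xs i)"
      "finite {i. Xs i \<noteq> topspace (discrete_topology (D i))}" "(\<Pi>\<^sub>E i\<in>I. Xs i) \<subseteq> W"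
    using product_topology_open_contains_basis[OF assms] by blast
  have "clopenin (product_topology (\<lambda>i. discrete_topology (D i)) I) (\<Pi>\<^sub>E i\<in>I. Xs i)"
    unfolding clopenin_def
    using Xs(2,3) by (auto intro: product_topology_basis simp: closedin_product_topology)
  with Xs(1,4) that show ?thesis by blast
qed

lemma boolean_product_open_infinite:
  assumes "infinite I" "openin (product_topology (\<lambda>_. discrete_topology (UNIV::bool set)) I) W" "p \<in> W"
  shows "infinite W"
proof
  assume "finite W"
  obtain Xs where Xs: "p \<in> (\<Pi>\<^sub>E i\<in>I. Xs i)" "finite {i. Xs i \<noteq> UNIV}" "(\<Pi>\<^sub>E i\<in>I. Xs i) \<subseteq> W"
    using product_topology_open_contains_basis[OF assms(2,3)] by auto
  define J where "J = I - {i. Xs i \<noteq> UNIV}"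
  have "infinite J" using assms(1) Xs(2) by (simp add: J_def)
  have "(\<lambda>j. p(j := \<not> p j)) ` J \<subseteq> W"
  proof
    fix q assume "q \<in> (\<lambda>j. p(j := \<not> p j)) ` J"
    then obtain j where "j \<in> J" "q = p(j := \<not> p j)" by blast
    then have "q \<in> (\<Pi>\<^sub>E i\<in>I. Xs i)"
      using Xs(1) by (auto simp: J_def PiE_iff extensional_def)
    with Xs(3) show "q \<in> W" by blast
  qed
  then have "finite ((\<lambda>j. p(j := \<not> p j)) ` J)"
    using \<open>finite W\<close> by (rule finite_subset)
  moreover have "inj_on (\<lambda>j. p(j := \<not> p j)) J"
    by (rule inj_onI) (metis fun_upd_same fun_upd_other)
  ultimately have "finite J"
    by (rule finite_imageD)
  with \<open>infinite J\<close> show False by contradiction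
qed

lemma cantor_space_parametrisation:
  assumes "cantor_space X"
  obtains g where "homeomorphic_map (product_topology (\<lambda>_::nat. discrete_topology (UNIV::bool set)) UNIV) X g"
proof -
  have "product_topology (\<lambda>_::nat. discrete_topology (UNIV::bool set)) UNIV homeomorphic_space X"
    using assms homeomorphic_space_sym unfolding cantor_space_def by blast
  with that show ?thesis by (auto simp: homeomorphic_space)
qed

lemma cantor_space_clopen_nhood:
  assumes "cantor_space X" "openin X W" "p \<in> W"
  obtains Q where "clopenin X Q" "p \<in> Q" "Q \<subseteq> W"
proof -
  let ?C = "product_topology (\<lambda>_::nat. discrete_topology (UNIV::bool set)) UNIV"
  obtain g where g: "homeomorphic_map ?C X g"
    using cantor_space_parametrisation[OF assms(1)] .
  then have g_onto: "g ` topspace ?C = topspace X" and g_cont: "continuous_map ?C X g"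
    by (auto simp: homeomorphic_eq_everything_map)
  obtain y where y: "y \<in> topspace ?C" "g y = p"
    using assms(2,3) g_onto openin_subset by (metis imageE subsetD)
  have "openin ?C {x \<in> topspace ?C. g x \<in> W}"
    using openin_continuous_map_preimage[OF g_cont assms(2)] .
  moreover have "y \<in> {x \<in> topspace ?C. g x \<in> W}"
    using y assms(3) by simp
  ultimately obtain Q0 where Q0: "clopenin ?C Q0" "y \<in> Q0" "Q0 \<subseteq> {x \<in> topspace ?C. g x \<in> W}"
    by (rule discrete_product_clopen_nhood)
  have "clopenin X (g ` Q0)"
    using Q0(1,3) homeomorphic_map_openness[OF g] homeomorphic_map_closedness[OF g]
    by (auto simp: clopenin_def)
  with Q0(2,3) y(2) that show ?thesis by blast
qed

lemma cantor_space_open_infinite: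
  assumes "cantor_space X" "openin X W" "W \<noteq> {}"
  shows "infinite W"
proof
  assume "finite W"
  let ?C = "product_topology (\<lambda>_::nat. discrete_topology (UNIV::bool set)) UNIV"
  obtain g where g: "homeomorphic_map ?C X g"
    using cantor_space_parametrisation[OF assms(1)] .
  then have g_onto: "g ` topspace ?C = topspace X" and g_inj: "inj_on g (topspace ?C)"
    and g_cont: "continuous_map ?C X g"
    by (auto simp: homeomorphic_eq_everything_map)
  define W0 where "W0 = {x \<in> topspace ?C. g x \<in> W}"
  have W0_open: "openin ?C W0"
    unfolding W0_def using openin_continuous_map_preimage[OF g_cont assms(2)] .
  obtain w where "w \<in> W"
    using assms(3) by blast
  then have "w \<in> g ` topspace ?C"
    using g_onto openin_subset[OF assms(2)] by blast
  then obtain y where "y \<in> topspace ?C" "g y = w"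
    by blast
  with \<open>w \<in> W\<close> have "y \<in> W0"
    by (simp add: W0_def)
  then have "infinite W0"
    by (rule boolean_product_open_infinite[OF infinite_UNIV_nat W0_open])
  moreover have "finite W0"
  proof (rule finite_imageD)
    show "finite (g ` W0)"
      using \<open>finite W\<close> by (rule finite_subset[rotated]) (auto simp: W0_def)
    show "inj_on g W0"
      using g_inj by (rule inj_on_subset) (auto simp: W0_def)
  qed
  ultimately show False by contradiction
qed

lemma cantor_space_closedin_singleton:
  assumes "cantor_space X" "p \<in> topspace X"
  shows "closedin X {p}"
proof -
  have "Hausdorff_space (product_topology (\<lambda>_::nat. discrete_topology (UNIV::bool set)) UNIV)"
    by (simp add: Hausdorff_space_product_topology)
  then have "t1_space X"
    using assms(1) homeomorphic_Hausdorff_space Hausdorff_imp_t1_space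
    unfolding cantor_space_def by blast
  with assms(2) show ?thesis
    by (simp add: t1_space_closedin_singleton)
qed

lemma homeo_group_simps [simp]:
  "carrier (homeo_group X) = Homeo X"
  "a \<otimes>\<^bsub>homeo_group X\<^esub> b = b \<circ> a"
  "\<one>\<^bsub>homeo_group X\<^esub> = id"
  by (simp_all add: homeo_group_def)

lemma Homeo_fixes_outside: "k \<in> Homeo X \<Longrightarrow> x \<notin> topspace X \<Longrightarrow> k x = x"
  by (simp add: Homeo_def)

lemma Homeo_in_topspace: "k \<in> Homeo X \<Longrightarrow> x \<in> topspace X \<Longrightarrow> k x \<in> topspace X"
  unfolding Homeo_def homeomorphic_eq_everything_map by blast

lemma Homeo_comp: "a \<in> Homeo X \<Longrightarrow> b \<in> Homeo X \<Longrightarrow> b \<circ> a \<in> Homeo X"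
  unfolding Homeo_def using homeomorphic_map_compose by fastforce

lemma id_in_Homeo: "id \<in> Homeo X"
  by (simp add: Homeo_def)

lemma Homeo_right_inverse:
  assumes "k \<in> Homeo X"
  obtains h where "h \<in> Homeo X" "k \<circ> h = id"
proof -
  obtain k' where "homeomorphic_maps X X k k'"
    using assms by (auto simp: Homeo_def homeomorphic_map_maps)
  then have k': "homeomorphic_map X X k'" "\<And>y. y \<in> topspace X \<Longrightarrow> k (k' y) = y"
    by (auto simp: homeomorphic_maps_map)
  define h where "h = (\<lambda>x. if x \<in> topspace X then k' x else x)"
  have "homeomorphic_map X X h"
    by (rule homeomorphic_map_eq[OF k'(1)]) (simp add: h_def)
  then have "h \<in> Homeo X"
    by (simp add: Homeo_def h_def)
  moreover have "k \<circ> h = id"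
    by (rule ext) (simp add: h_def k'(2) Homeo_fixes_outside[OF assms])
  ultimately show ?thesis using that by blast
qed

lemma group_homeo_group: "group (homeo_group X)"
proof (rule groupI)
  fix x assume "x \<in> carrier (homeo_group X)"
  then obtain h where "h \<in> Homeo X" "x \<circ> h = id"
    using Homeo_right_inverse by auto
  then show "\<exists>y\<in>carrier (homeo_group X). y \<otimes>\<^bsub>homeo_group X\<^esub> x = \<one>\<^bsub>homeo_group X\<^esub>"
    by auto
qed (auto simp: Homeo_comp id_in_Homeo comp_assoc)

lemma homeo_group_inv:
  assumes "k \<in> Homeo X"
  shows "inv\<^bsub>homeo_group X\<^esub> k \<in> Homeo X"
    and "k ((inv\<^bsub>homeo_group X\<^esub> k) x) = x"
    and "(inv\<^bsub>homeo_group X\<^esub> k) (k x) = x"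
proof -
  interpret group "homeo_group X" by (rule group_homeo_group)
  have k: "k \<in> carrier (homeo_group X)" using assms by simp
  show "inv\<^bsub>homeo_group X\<^esub> k \<in> Homeo X" using inv_closed[OF k] by simp
  show "k ((inv\<^bsub>homeo_group X\<^esub> k) x) = x" using l_inv[OF k] by (simp add: fun_eq_iff)
  show "(inv\<^bsub>homeo_group X\<^esub> k) (k x) = x" using r_inv[OF k] by (simp add: fun_eq_iff)
qed

lemma clopenin_Un: "clopenin X A \<Longrightarrow> clopenin X B \<Longrightarrow> clopenin X (A \<union> B)"
  unfolding clopenin_def by auto

lemma clopenin_diff: "clopenin X A \<Longrightarrow> clopenin X B \<Longrightarrow> clopenin X (A - B)"
  unfolding clopenin_def by (auto intro: openin_diff closedin_diff)

lemma clopenin_Homeo_image: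
  assumes "k \<in> Homeo X" "clopenin X Q"
  shows "clopenin X (k ` Q)"
proof -
  have "homeomorphic_map X X k" "Q \<subseteq> topspace X"
    using assms by (auto simp: Homeo_def clopenin_def openin_subset)
  with assms(2) show ?thesis
    using homeomorphic_map_openness homeomorphic_map_closedness unfolding clopenin_def by blast
qed

lemma supp_subset_iff: "supp X k \<subseteq> V \<longleftrightarrow> (\<forall>p \<in> topspace X - V. k p = p)"
  by (auto simp: supp_def)

lemma supp_conjugate:
  assumes "x \<in> Homeo X" "g \<in> Homeo X"
  shows "supp X (inv\<^bsub>homeo_group X\<^esub> x \<otimes>\<^bsub>homeo_group X\<^esub> g \<otimes>\<^bsub>homeo_group X\<^esub> x) = x ` supp X g"
proof -
  let ?xi = "inv\<^bsub>homeo_group X\<^esub> x"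
  note xi = homeo_group_inv[OF assms(1)]
  have "supp X (?xi \<otimes>\<^bsub>homeo_group X\<^esub> g \<otimes>\<^bsub>homeo_group X\<^esub> x) =
      {p \<in> topspace X. x (g (?xi p)) \<noteq> p}"
    by (simp add: supp_def)
  also have "\<dots> = x ` supp X g"
  proof
    show "{p \<in> topspace X. x (g (?xi p)) \<noteq> p} \<subseteq> x ` supp X g"
    proof
      fix p assume p: "p \<in> {p \<in> topspace X. x (g (?xi p)) \<noteq> p}"
      have "g (?xi p) \<noteq> ?xi p"
      proof
        assume "g (?xi p) = ?xi p"
        with p show False by (simp add: xi(2))
      qed
      moreover have "?xi p \<in> topspace X"
        using p Homeo_in_topspace[OF xi(1)] by blast
      ultimately have "?xi p \<in> supp X g"
        by (simp add: supp_def)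
      then show "p \<in> x ` supp X g"
        by (metis xi(2) imageI)
    qed
    show "x ` supp X g \<subseteq> {p \<in> topspace X. x (g (?xi p)) \<noteq> p}"
    proof
      fix p assume "p \<in> x ` supp X g"
      then obtain q where q: "q \<in> topspace X" "g q \<noteq> q" "p = x q"
        by (auto simp: supp_def)
      have "x (g q) \<noteq> x q"
      proof
        assume "x (g q) = x q"
        then have "?xi (x (g q)) = ?xi (x q)" by simp
        with q(2) show False by (simp add: xi(3))
      qed
      with q show "p \<in> {p \<in> topspace X. x (g (?xi p)) \<noteq> p}"
        by (simp add: xi(3) Homeo_in_topspace[OF assms(1)])
    qed
  qed
  finally show ?thesis .
qed

lemma vigorousE:
  assumes "vigorous X S" "clopenin X A" "clopenin X B" "clopenin X C"
    and "B \<noteq> {}" "C \<noteq> {}" "B \<subset> A" "C \<subset> A"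
  obtains \<gamma> where "\<gamma> \<in> S" "supp X \<gamma> \<subseteq> A" "\<gamma> ` B \<subseteq> C"
proof -
  have "\<exists>\<gamma>\<in>S. supp X \<gamma> \<subseteq> A \<and> \<gamma> ` B \<subseteq> C"
    using assms(1) unfolding vigorous_def
    by (rule allE[of _ A], rule allE[of _ B], rule allE[of _ C]) (use assms(2-8) in simp)
  with that show ?thesis by blast
qed

lemma pstab_subgroup:
  assumes "subgroup G (homeo_group X)"
  shows "subgroup (pstab X G A) (homeo_group X)"
proof -
  interpret subgroup G "homeo_group X" by (rule assms)
  show ?thesis
  proof
    show "pstab X G A \<subseteq> carrier (homeo_group X)"
      using subset by (auto simp: pstab_def)
  next
    fix a b assume "a \<in> pstab X G A" "b \<in> pstab X G A"
    then show "a \<otimes>\<^bsub>homeo_group X\<^esub> b \<in> pstab X G A"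
      using m_closed by (auto simp: pstab_def)
  next
    show "\<one>\<^bsub>homeo_group X\<^esub> \<in> pstab X G A"
      using one_closed by (auto simp: pstab_def)
  next
    fix a assume "a \<in> pstab X G A"
    then have aG: "a \<in> G" and a_fix: "\<And>p. p \<in> A \<Longrightarrow> a p = p"
      by (auto simp: pstab_def)
    have aH: "a \<in> Homeo X"
      using aG subset by auto
    have "(inv\<^bsub>homeo_group X\<^esub> a) p = p" if "p \<in> A" for p
      using homeo_group_inv(3)[OF aH, of p] a_fix[OF that] by simp
    with aG m_inv_closed show "inv\<^bsub>homeo_group X\<^esub> a \<in> pstab X G A"
      by (auto simp: pstab_def)
  qed
qed

lemma X_GU_subset_pstab: "X_GU X G U \<subseteq> pstab X G (topspace X - U)"
  by (auto simp: X_GU_def pstab_def supp_def)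

lemma Homeo_image_subset_if_fixes_complement:
  assumes "g \<in> Homeo X" "\<forall>p \<in> topspace X - U. g p = p" "U \<subseteq> topspace X"
  shows "g ` U \<subseteq> U"
proof
  fix q assume "q \<in> g ` U"
  then obtain u where u: "u \<in> U" "q = g u" by blast
  show "q \<in> U"
  proof (rule ccontr)
    assume "q \<notin> U"
    moreover have "q \<in> topspace X"
      using Homeo_in_topspace[OF assms(1)] u assms(3) by auto
    ultimately have "g (g u) = g u"
      using assms(2) u(2) by simp
    then have "(inv\<^bsub>homeo_group X\<^esub> g) (g (g u)) = (inv\<^bsub>homeo_group X\<^esub> g) (g u)"
      by simp
    then have "q = u"
      using u(2) by (simp add: homeo_group_inv(3)[OF assms(1)])
    with u(1) \<open>q \<notin> U\<close> show False by simp
  qed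
qed

lemma cantor_space_shrinking_clopen_pair:
  assumes "cantor_space X" "openin X U" "U \<noteq> {}" "g \<in> Homeo X" "g ` U \<subseteq> U"
  obtains Q Q' where "clopenin X Q" "clopenin X Q'" "Q' \<noteq> {}" "Q' \<subset> Q" "Q \<union> g ` Q \<subset> U"
proof -
  have UT: "U \<subseteq> topspace X" using assms(2) by (rule openin_subset)
  obtain p0 where p0: "p0 \<in> U" using assms(3) by blast
  have "infinite (U - {p0, g p0})"
    using cantor_space_open_infinite[OF assms(1-3)] by simp
  then obtain q where q: "q \<in> U" "q \<noteq> p0" "q \<noteq> g p0"
    using infinite_imp_nonempty by blast
  \<comment> \<open>If Q avoids both q and g\<inverse> q, then q lies outside Q \<union> g ` Q.\<close>
  define r where "r = (inv\<^bsub>homeo_group X\<^esub> g) q"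
  have "q \<in> topspace X" "r \<in> topspace X"
    using q(1) UT Homeo_in_topspace[OF homeo_group_inv(1)[OF assms(4)]] by (auto simp: r_def)
  then have "closedin X ({q} \<union> {r})"
    by (intro closedin_Un cantor_space_closedin_singleton[OF assms(1)])
  then have "openin X (U - ({q} \<union> {r}))"
    by (rule openin_diff[OF assms(2)])
  moreover have "p0 \<in> U - ({q} \<union> {r})"
    using p0 q homeo_group_inv(2)[OF assms(4)] by (auto simp: r_def)
  ultimately obtain Q where Q: "clopenin X Q" "p0 \<in> Q" "Q \<subseteq> U - ({q} \<union> {r})"
    by (rule cantor_space_clopen_nhood[OF assms(1)])
  then have "infinite (Q - {p0})"
    using cantor_space_open_infinite[OF assms(1)] by (auto simp: clopenin_def)
  then obtain p1 where p1: "p1 \<in> Q" "p1 \<noteq> p0"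
    using infinite_imp_nonempty by blast
  have "closedin X {p1}"
    using p1(1) Q(3) UT by (intro cantor_space_closedin_singleton[OF assms(1)]) blast
  then have "openin X (Q - {p1})"
    using Q(1) by (auto simp: clopenin_def intro: openin_diff)
  moreover have "p0 \<in> Q - {p1}"
    using Q(2) p1(2) by blast
  ultimately obtain Q' where Q': "clopenin X Q'" "p0 \<in> Q'" "Q' \<subseteq> Q - {p1}"
    by (rule cantor_space_clopen_nhood[OF assms(1)])
  have "q \<notin> g ` Q"
  proof
    assume "q \<in> g ` Q"
    then obtain y where "y \<in> Q" "q = g y" by blast
    then have "y = r"
      using homeo_group_inv(3)[OF assms(4)] by (simp add: r_def)
    with \<open>y \<in> Q\<close> Q(3) show False by blast
  qed
  then have "Q \<union> g ` Q \<subset> U"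
    using Q(3) assms(5) q(1) by blast
  moreover have "Q' \<subset> Q"
    using Q'(3) p1(1) by blast
  ultimately show ?thesis
    using that Q(1) Q'(1,2) by blast
qed

lemma conjugate_apply_if_fixed:
  assumes "x \<in> Homeo X" "x y = y" "x (g y) = g y"
  shows "(inv\<^bsub>homeo_group X\<^esub> x \<otimes>\<^bsub>homeo_group X\<^esub> g \<otimes>\<^bsub>homeo_group X\<^esub> x) y = g y"
proof -
  have "(inv\<^bsub>homeo_group X\<^esub> x) y = y"
    using homeo_group_inv(3)[OF assms(1), of y] assms(2) by simp
  with assms(3) show ?thesis by simp
qed

lemma conjugate_compressing_support:
  assumes "x \<in> Homeo X" "g \<in> Homeo X" "supp X g \<subseteq> U" "g ` U \<subseteq> U"
    and "\<forall>u \<in> U - Q. x u = u" "x ` Q \<subseteq> Q'" "Q' \<subseteq> Q" "Q \<subseteq> U"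
  defines "a \<equiv> inv\<^bsub>homeo_group X\<^esub> x \<otimes>\<^bsub>homeo_group X\<^esub> g \<otimes>\<^bsub>homeo_group X\<^esub> x"
  shows "supp X a \<subseteq> (U - Q) \<union> Q'"
    and "\<forall>y \<in> topspace X. y \<notin> Q \<longrightarrow> g y \<notin> Q \<longrightarrow> a y = g y"
proof -
  have "x ` U \<subseteq> (U - Q) \<union> Q'"
  proof
    fix p assume "p \<in> x ` U"
    then obtain u where "u \<in> U" "p = x u" by blast
    then show "p \<in> (U - Q) \<union> Q'"
      using assms(5,6) by (cases "u \<in> Q") auto
  qed
  moreover have "x ` supp X g \<subseteq> x ` U"
    using assms(3) by (rule image_mono)
  ultimately show supp_a: "supp X a \<subseteq> (U - Q) \<union> Q'"
    unfolding a_def supp_conjugate[OF assms(1,2)] by (rule order_trans[rotated])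
  show "\<forall>y \<in> topspace X. y \<notin> Q \<longrightarrow> g y \<notin> Q \<longrightarrow> a y = g y"
  proof (intro ballI impI)
    fix y assume y: "y \<in> topspace X" "y \<notin> Q" "g y \<notin> Q"
    show "a y = g y"
    proof (cases "y \<in> U")
      case True
      then have "g y \<in> U"
        using assms(4) by blast
      with True y assms(5) have "x y = y" "x (g y) = g y"
        by simp_all
      then show ?thesis
        unfolding a_def by (rule conjugate_apply_if_fixed[OF assms(1)])
    next
      case False
      then have "y \<notin> supp X a" "y \<notin> supp X g"
        using supp_a assms(3,7,8) by blast+
      with y(1) show ?thesis by (simp add: supp_def)
    qed
  qed
qed

lemma supp_inv_mult_subset:
  assumes "a \<in> Homeo X" "g \<in> Homeo X" "\<forall>y \<in> topspace X - S. a y = g y"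
  shows "supp X (inv\<^bsub>homeo_group X\<^esub> a \<otimes>\<^bsub>homeo_group X\<^esub> g) \<subseteq> g ` S"
proof
  fix p assume p: "p \<in> supp X (inv\<^bsub>homeo_group X\<^esub> a \<otimes>\<^bsub>homeo_group X\<^esub> g)"
  define y where "y = (inv\<^bsub>homeo_group X\<^esub> g) p"
  have pT: "p \<in> topspace X"
    using p by (simp add: supp_def)
  have gy: "g y = p"
    unfolding y_def by (rule homeo_group_inv(2)[OF assms(2)])
  have yT: "y \<in> topspace X"
    unfolding y_def by (rule Homeo_in_topspace[OF homeo_group_inv(1)[OF assms(2)] pT])
  show "p \<in> g ` S"
  proof (rule ccontr)
    assume "p \<notin> g ` S"
    then have "y \<notin> S"
      using gy by blast
    with yT assms(3) gy have "a y = p"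
      by simp
    then have "g ((inv\<^bsub>homeo_group X\<^esub> a) p) = p"
      using homeo_group_inv(3)[OF assms(1), of y] gy by simp
    with p show False by (simp add: supp_def)
  qed
qed

lemma X_GU_I:
  assumes "\<gamma> \<in> G" "clopenin X V" "V \<subset> U" "supp X \<gamma> \<subseteq> V"
  shows "\<gamma> \<in> X_GU X G U"
  using assms by (auto simp: X_GU_def)

lemma vigorous_compressing_element:
  assumes "vigorous X G" "clopenin X U" "U \<subset> topspace X"
    and "clopenin X Q" "clopenin X Q'" "Q' \<noteq> {}" "Q' \<subset> Q" "Q \<subseteq> U"
  obtains x where "x \<in> G" "\<forall>u \<in> U - Q. x u = u" "x ` Q \<subseteq> Q'"
proof -
  define A where "A = Q \<union> (topspace X - U)"
  have "clopenin X (topspace X)"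
    by (simp add: clopenin_def)
  then have "clopenin X A"
    unfolding A_def by (intro clopenin_Un assms(4) clopenin_diff assms(2))
  moreover have "Q \<subset> A" "Q' \<subset> A" "Q \<noteq> {}"
    using assms(3,6-8) by (auto simp: A_def)
  ultimately obtain x where x: "x \<in> G" "supp X x \<subseteq> A" "x ` Q \<subseteq> Q'"
    using vigorousE[OF assms(1) _ assms(4,5) _ assms(6)] by blast
  moreover have "\<forall>u \<in> U - Q. x u = u"
    using x(2) assms(3) by (auto simp: supp_subset_iff A_def)
  ultimately show ?thesis
    using that by blast
qed

lemma pstab_factor_X_GU:
  assumes "cantor_space X" "subgroup G (homeo_group X)" "vigorous X G" "U \<in> K_sets X"
    and "g \<in> pstab X G (topspace X - U)"
  obtains a b where "a \<in> X_GU X G U" "b \<in> X_GU X G U" "g = a \<otimes>\<^bsub>homeo_group X\<^esub> b"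
proof -
  interpret subgroup G "homeo_group X" by (rule assms(2))
  have GH: "G \<subseteq> Homeo X"
    using subset by simp
  have gG: "g \<in> G" and g_fix: "\<forall>p \<in> topspace X - U. g p = p"
    using assms(5) by (auto simp: pstab_def)
  have cU: "clopenin X U" and "U \<noteq> {}" and UT: "U \<subset> topspace X"
    using assms(4) by (auto simp: K_sets_def)
  have gH: "g \<in> Homeo X"
    using gG GH by blast
  have gU: "g ` U \<subseteq> U"
    using Homeo_image_subset_if_fixes_complement gH g_fix UT by blast
  have supp_g: "supp X g \<subseteq> U"
    using g_fix by (simp add: supp_subset_iff)
  have "openin X U"
    using cU by (simp add: clopenin_def)
  then obtain Q Q' where Q: "clopenin X Q" "clopenin X Q'" "Q' \<noteq> {}" "Q' \<subset> Q" "Q \<union> g ` Q \<subset> U"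
    by (rule cantor_space_shrinking_clopen_pair[OF assms(1) _ \<open>U \<noteq> {}\<close> gH gU])
  then have QU: "Q' \<subseteq> Q" "Q \<subseteq> U"
    by auto
  obtain x where x: "x \<in> G" "\<forall>u \<in> U - Q. x u = u" "x ` Q \<subseteq> Q'"
    by (rule vigorous_compressing_element[OF assms(3) cU UT Q(1-4) QU(2)])
  have xH: "x \<in> Homeo X"
    using x(1) GH by blast
  define a where "a = inv\<^bsub>homeo_group X\<^esub> x \<otimes>\<^bsub>homeo_group X\<^esub> g \<otimes>\<^bsub>homeo_group X\<^esub> x"
  note a_props = conjugate_compressing_support[OF xH gH supp_g gU x(2,3) QU, folded a_def]
  have aG: "a \<in> G"
    unfolding a_def using x(1) gG m_closed m_inv_closed by blast
  have "clopenin X ((U - Q) \<union> Q')"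
    by (intro clopenin_Un clopenin_diff cU Q(1,2))
  moreover have "(U - Q) \<union> Q' \<subset> U"
    using Q(4,5) by blast
  ultimately have a: "a \<in> X_GU X G U"
    using X_GU_I[OF aG] a_props(1) by blast
  define b where "b = inv\<^bsub>homeo_group X\<^esub> a \<otimes>\<^bsub>homeo_group X\<^esub> g"
  have aH: "a \<in> Homeo X"
    using aG GH by blast
  have "supp X b \<subseteq> g ` {y. y \<in> Q \<or> g y \<in> Q}"
    unfolding b_def using a_props(2) by (intro supp_inv_mult_subset[OF aH gH]) auto
  also have "\<dots> \<subseteq> Q \<union> g ` Q"
    by auto
  finally have "supp X b \<subseteq> Q \<union> g ` Q" .
  moreover have "clopenin X (Q \<union> g ` Q)"
    using Q(1) clopenin_Homeo_image[OF gH Q(1)] by (rule clopenin_Un)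
  moreover have "b \<in> G"
    unfolding b_def using aG gG m_closed m_inv_closed by blast
  ultimately have b: "b \<in> X_GU X G U"
    using X_GU_I Q(5) by blast
  have "g = a \<otimes>\<^bsub>homeo_group X\<^esub> b"
    by (simp add: b_def fun_eq_iff homeo_group_inv(3)[OF aH])
  with a b that show ?thesis by blast
qed

theorem lemma2p7:
  fixes X :: "'a topology" and G :: "('a \<Rightarrow> 'a) set" and U :: "'a set"
  assumes "cantor_space X"
    and "subgroup G (homeo_group X)"
    and "vigorous X G"
    and "U \<in> K_sets X"
  shows "generate (homeo_group X) (X_GU X G U) = pstab X G (topspace X - U)"
proof
  interpret group "homeo_group X" by (rule group_homeo_group)
  show "generate (homeo_group X) (X_GU X G U) \<subseteq> pstab X G (topspace X - U)"
    by (rule generate_subgroup_incl[OF X_GU_subset_pstab pstab_subgroup[OF assms(2)]])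
  show "pstab X G (topspace X - U) \<subseteq> generate (homeo_group X) (X_GU X G U)"
  proof
    fix g assume "g \<in> pstab X G (topspace X - U)"
    then obtain a b where ab: "a \<in> X_GU X G U" "b \<in> X_GU X G U" and "g = a \<otimes>\<^bsub>homeo_group X\<^esub> b"
      by (rule pstab_factor_X_GU[OF assms])
    moreover have "a \<otimes>\<^bsub>homeo_group X\<^esub> b \<in> generate (homeo_group X) (X_GU X G U)"
      using ab by (intro generate.eng generate.incl)
    ultimately show "g \<in> generate (homeo_group X) (X_GU X G U)"
      by (simp only:)
  qed
qed

end
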